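(* Let $K$ satisfy the standing kernel assumptions (see context) and assume $K(x,y)\ge c_0>0$ for all $x,y>0$. Let $f$ be a self-similar profile for $K$ with $\int_0^\infty x f(x)\,dx=1$ and $Q(q)=\int_0^\infty(1-e^{-qx})f(x)\,dx$. Then: $\lim_{q\to\infty}Q(q)<\infty$, and hence $\int_0^\infty f(x)\,dx<\infty$; $\sup_{q>0}|qQ'(q)|\le C$ for some constant $C$; $\int_0^\infty\int_0^\infty K(x,y)f(x)f(y)\,dx\,dy<\infty$; and $\lim_{q\to\infty}\mathcal{M}(f,f)(q)$ exists and is finite.
   Context: Standing kernel assumptions: $\alpha\in[0,1)$, $\varepsilon>0$, $C_0>0$; $K:(0,\infty)^2\to[0,\infty)$ is symmetric, homogeneous of degree zero, differentiable, and with $W:=K-2$: $W\ge-\varepsilon$, $W(x,y)\le \varepsilon((x/y)^{\alpha}+(y/x)^{\alpha})$, $|\partial_x K(x,y)|\le \frac{C_0\varepsilon}{x}((x/y)^{\alpha}+(y/x)^{\alpha})$. A self-similar profile for $K$ is $f\in L^1_{loc}(0,\infty)$, $f\ge0$, $\int_0^\infty xf\,dx<\infty$, with $x^2 f(x)=\int_0^x dy\int_{x-y}^\infty dz\,K(y,z)\,y\,f(y)f(z)$ for a.e. $x>0$. $\mathcal{M}(f,f)(q)=\frac12\int_0^\infty\int_0^\infty W(x,y)f(x)f(y)(1-e^{-qx})(1-e^{-qy})\,dx\,dy$. *)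

theory Defs
  imports "HOL-Analysis.Analysis"
begin

definition W :: "(real \<Rightarrow> real \<Rightarrow> real) \<Rightarrow> real \<Rightarrow> real \<Rightarrow> real" where
  "W K x y = K x y - 2"

definition kernel_assms ::
  "real \<Rightarrow> real \<Rightarrow> real \<Rightarrow> (real \<Rightarrow> real \<Rightarrow> real) \<Rightarrow> bool" where
  "kernel_assms \<alpha> \<epsilon> C\<^sub>0 K \<longleftrightarrow>
     0 \<le> \<alpha> \<and> \<alpha> < 1 \<and> \<epsilon> > 0 \<and> C\<^sub>0 > 0 \<and>
     (\<forall>x>0. \<forall>y>0. K x y \<ge> 0) \<and>
     (\<forall>x>0. \<forall>y>0. K x y = K y x) \<and>
     (\<forall>t>0. \<forall>x>0. \<forall>y>0. K (t * x) (t * y) = K x y) \<and>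
     (\<forall>x>0. \<forall>y>0. (\<lambda>p. K (fst p) (snd p)) differentiable (at (x, y))) \<and>
     (\<forall>x>0. \<forall>y>0. W K x y \<ge> - \<epsilon>) \<and>
     (\<forall>x>0. \<forall>y>0. W K x y \<le> \<epsilon> * ((x / y) powr \<alpha> + (y / x) powr \<alpha>)) \<and>
     (\<forall>x>0. \<forall>y>0. \<bar>deriv (\<lambda>s. K s y) x\<bar>
                    \<le> C\<^sub>0 * \<epsilon> / x * ((x / y) powr \<alpha> + (y / x) powr \<alpha>))"

definition self_similar_profile ::
  "(real \<Rightarrow> real \<Rightarrow> real) \<Rightarrow> (real \<Rightarrow> real) \<Rightarrow> bool" where
  "self_similar_profile K f \<longleftrightarrow>
     (\<forall>a b. 0 < a \<longrightarrow> set_integrable lebesgue {a..b} f) \<and>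
     (AE x in lebesgue. x > 0 \<longrightarrow> f x \<ge> 0) \<and>
     set_integrable lebesgue {0<..} (\<lambda>x. x * f x) \<and>
     (AE x in lebesgue. x > 0 \<longrightarrow>
        ennreal (x\<^sup>2 * f x) =
          (\<integral>\<^sup>+ y\<in>{0<..<x}. (\<integral>\<^sup>+ z\<in>{x - y<..}. ennreal (K y z * y * f y * f z) \<partial>lebesgue) \<partial>lebesgue))"

definition Qf :: "(real \<Rightarrow> real) \<Rightarrow> real \<Rightarrow> real" where
  "Qf f q = (LINT x:{0<..}|lebesgue. (1 - exp (- q * x)) * f x)"

definition Mff :: "(real \<Rightarrow> real \<Rightarrow> real) \<Rightarrow> (real \<Rightarrow> real) \<Rightarrow> real \<Rightarrow> real" where
  "Mff K f q = 1 / 2 * (LINT x:{0<..}|lebesgue. (LINT y:{0<..}|lebesgue.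
       W K x y * f x * f y * (1 - exp (- q * x)) * (1 - exp (- q * y))))"

end

(*
  For e > 0 let P(e) be the mass of f beyond e. Dividing the self-similarity equation by x\<^sup>2,
  integrating over x > e and using Fubini together with the integral of y / x\<^sup>2 over [y, y + z],
  which is z / (y + z), bounds the interaction of the tail weighted by z / (y + z) by P(e).
  Symmetrising in (y, z) bounds the unweighted interaction of the tail by 2 P(e), and K \<ge> c\<^sub>0
  turns this into c\<^sub>0 P(e)\<^sup>2 \<le> 2 P(e). As P(e) is finite by the first moment, P(e) \<le> 2 / c\<^sub>0;
  letting e \<rightarrow> 0 gives \<integral> f \<le> 2 / c\<^sub>0 and \<integral>\<integral> K f f \<le> 4 / c\<^sub>0. The statements on Q and
  M(f, f) then follow by dominated convergence, using q x exp (- q x) \<le> 1 and |W| \<le> (1 + 2 / c\<^sub>0) K.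
*)

theory Submission
  imports Defs "HOL-Real_Asymp.Real_Asymp"
begin

lemma measurable_lebesgue_imp_borel [measurable (raw)]:
  "g \<in> M \<rightarrow>\<^sub>M (lebesgue :: real measure) \<Longrightarrow> g \<in> borel_measurable M"
  using measurable_compose[OF _ id_borel_measurable_lebesgue] by (simp add: comp_def)

lemma first_moment_imp_measurable:
  fixes f :: "real \<Rightarrow> real"
  assumes "set_integrable lebesgue {0<..} (\<lambda>x. x * f x)"
  shows "(\<lambda>x. indicator {0<..} x * f x) \<in> borel_measurable lebesgue"
proof -
  have [measurable]: "(\<lambda>x. indicator {0<..} x * (x * f x)) \<in> borel_measurable lebesgue"
    using assms by (simp add: set_integrable_def borel_measurable_integrable)
  have "(\<lambda>x. indicator {0<..} x * (x * f x) / x) \<in> borel_measurable lebesgue"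
    by measurable
  moreover have "(\<lambda>x. indicator {0<..} x * (x * f x) / x) = (\<lambda>x. indicator {0<..} x * f x)"
    by (auto simp: indicator_def)
  ultimately show ?thesis
    by simp
qed

lemma sigma_finite_lebesgue: "sigma_finite_measure (lebesgue :: real measure)"
proof
  show "\<exists>A::real set set. countable A \<and> A \<subseteq> sets lebesgue \<and> \<Union> A = space lebesgue
      \<and> (\<forall>a\<in>A. emeasure lebesgue a \<noteq> \<infinity>)"
  proof (intro exI conjI)
    show "\<Union> (range (\<lambda>n::nat. {- real n..real n})) = space lebesgue"
      by auto (metis abs_le_iff minus_le_iff real_arch_simple)
  qed auto
qed

interpretation lebesgue: sigma_finite_measure "lebesgue :: real measure"
  by (rule sigma_finite_lebesgue)

interpretation lebesgue_pair: pair_sigma_finite "lebesgue :: real measure" "lebesgue :: real measure" ..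

lemma nn_integral_inverse_square:
  fixes y z :: real
  assumes "0 < y" "0 < z"
  shows "(\<integral>\<^sup>+x. (if y < x \<and> x < y + z then ennreal (1 / x\<^sup>2) else 0) \<partial>lebesgue) = ennreal (1 / y - 1 / (y + z))"
proof -
  have "((\<lambda>x. - inverse x) has_real_derivative 1 / x\<^sup>2) (at x within {y..y + z})"
    if "x \<in> {y..y + z}" for x :: real
    using that assms by (auto intro!: derivative_eq_intros simp: power2_eq_square field_simps)
  then have "((\<lambda>x::real. 1 / x\<^sup>2) has_integral (1 / y - 1 / (y + z))) {y..y + z}"
    using assms fundamental_theorem_of_calculus[of y "y + z" "\<lambda>x. - inverse x"]
    by (simp add: has_real_derivative_iff_has_vector_derivative inverse_eq_divide)
  then have "((\<lambda>x::real. 1 / x\<^sup>2) has_integral (1 / y - 1 / (y + z))) {y<..<y + z}"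
    using has_integral_open_interval[of "\<lambda>x::real. 1 / x\<^sup>2" _ y "y + z"] by simp
  then have "(\<integral>\<^sup>+x. ennreal (1 / x\<^sup>2) * indicator {y<..<y + z} x \<partial>lborel) = ennreal (1 / y - 1 / (y + z))"
    by (intro nn_integral_has_integral_lebesgue') auto
  moreover have "(\<integral>\<^sup>+x. (if y < x \<and> x < y + z then ennreal (1 / x\<^sup>2) else 0) \<partial>lebesgue)
      = (\<integral>\<^sup>+x. ennreal (1 / x\<^sup>2) * indicator {y<..<y + z} x \<partial>lborel)"
    by (simp add: nn_integral_completion, intro nn_integral_cong) (simp add: indicator_def)
  ultimately show ?thesis
    by simp
qed

lemma nn_integral_if_pos_eq_SUP:
  fixes h :: "'a \<Rightarrow> real" and g :: "'a \<Rightarrow> ennreal"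
  assumes [measurable]: "h \<in> borel_measurable M" "g \<in> borel_measurable M"
  shows "(\<integral>\<^sup>+x. (if 0 < h x then g x else 0) \<partial>M) = (SUP n. \<integral>\<^sup>+x. (if 1 / Suc n < h x then g x else 0) \<partial>M)"
proof -
  have SUP_if: "(if 0 < t then c else 0) = (SUP n. if 1 / real (Suc n) < t then c else (0::ennreal))"
    for t :: real and c
  proof (cases "0 < t")
    case True
    then obtain n :: nat where "1 / real (Suc n) < t"
      using reals_Archimedean by (auto simp: inverse_eq_divide)
    then show ?thesis
      using True by (intro antisym SUP_upper2[of n] SUP_least) auto
  next
    case False
    then have "\<not> 1 / real (Suc n) < t" for n
      by (smt (verit) divide_pos_pos of_nat_0_less_iff zero_less_Suc)
    then show ?thesis
      using False by simp
  qed
  have "incseq (\<lambda>n x. if 1 / real (Suc n) < h x then g x else 0)"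
  proof (intro incseq_SucI le_funI)
    fix n x
    have "1 / real (Suc (Suc n)) \<le> 1 / real (Suc n)"
      by (simp add: frac_le)
    then show "(if 1 / real (Suc n) < h x then g x else 0) \<le> (if 1 / real (Suc (Suc n)) < h x then g x else 0)"
      by auto
  qed
  then have "(\<integral>\<^sup>+x. (SUP n. if 1 / Suc n < h x then g x else 0) \<partial>M) = (SUP n. \<integral>\<^sup>+x. (if 1 / Suc n < h x then g x else 0) \<partial>M)"
    by (intro nn_integral_monotone_convergence_SUP) measurable
  then show ?thesis
    by (simp only: SUP_if)
qed

lemma nn_integral2_cong_AE:
  assumes "AE x in M. g x = g' x"
  shows "(\<integral>\<^sup>+x. \<integral>\<^sup>+y. F x y (g x) (g y) \<partial>M \<partial>M) = (\<integral>\<^sup>+x. \<integral>\<^sup>+y. F x y (g' x) (g' y) \<partial>M \<partial>M)"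
  using assms
proof (intro nn_integral_cong_AE, eventually_elim)
  case (elim x)
  show ?case
    using assms by (intro nn_integral_cong_AE, eventually_elim) (simp add: elim)
qed

lemma abs_exp_neg_diff_le:
  fixes a b :: real
  assumes "0 \<le> a" "0 \<le> b"
  shows "\<bar>exp (- a) - exp (- b)\<bar> \<le> \<bar>a - b\<bar>"
proof -
  have "exp (- u) - exp (- v) \<le> v - u" if "0 \<le> u" "u \<le> v" for u v :: real
  proof -
    have "exp (- u) - exp (- v) = exp (- u) * (1 - exp (u - v))"
      by (simp add: algebra_simps flip: exp_add)
    also have "\<dots> \<le> 1 - exp (u - v)"
      using that by (intro mult_left_le_one_le) auto
    also have "\<dots> \<le> v - u"
      using exp_ge_add_one_self[of "u - v"] by linarith
    finally show ?thesis .
  qed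
  from this[of a b] this[of b a] assms show ?thesis
    by (cases "a \<le> b") auto
qed

lemma one_minus_exp_neg_bounds:
  fixes t :: real
  assumes "0 \<le> t"
  shows "0 \<le> 1 - exp (- t)" "1 - exp (- t) \<le> 1" "1 - exp (- t) \<le> t"
  using assms exp_ge_add_one_self[of "- t"] by auto

lemma tendsto_one_minus_exp_neg_at_top:
  fixes x :: real
  assumes "0 < x"
  shows "((\<lambda>q. 1 - exp (- q * x)) \<longlongrightarrow> 1) at_top"
  using assms by real_asymp

lemma integral_tendsto_at_top_dominated_factor:
  fixes F :: "'a \<Rightarrow> real" and \<phi> :: "real \<Rightarrow> 'a \<Rightarrow> real"
  assumes "integrable M F" and [measurable]: "\<And>q. \<phi> q \<in> borel_measurable M"
    and bound: "\<And>q x. 0 \<le> q \<Longrightarrow> \<bar>\<phi> q x * F x\<bar> \<le> \<bar>F x\<bar>"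
    and "\<And>x. ((\<lambda>q. \<phi> q x * F x) \<longlongrightarrow> F x) at_top"
  shows "((\<lambda>q. \<integral>x. \<phi> q x * F x \<partial>M) \<longlongrightarrow> integral\<^sup>L M F) at_top"
proof (rule integral_dominated_convergence_at_top[where w = "\<lambda>x. \<bar>F x\<bar>"])
  show "\<forall>\<^sub>F q in at_top. AE x in M. norm (\<phi> q x * F x) \<le> \<bar>F x\<bar>"
    using eventually_ge_at_top[of "0::real"] by eventually_elim (simp add: bound)
qed (use assms in auto)

lemma Qf_eq_integral: "Qf f q = (\<integral>x. (1 - exp (- q * x)) * (indicator {0<..} x * f x) \<partial>lebesgue)"
  unfolding Qf_def set_lebesgue_integral_def by (simp add: mult_ac)

lemma Qf_tendsto_at_top:
  assumes "set_integrable lebesgue {0<..} f"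
  shows "(Qf f \<longlongrightarrow> (LINT x:{0<..}|lebesgue. f x)) at_top"
proof -
  define h where "h = (\<lambda>x::real. indicator {0<..} x * f x)"
  have "((\<lambda>q. \<integral>x. (1 - exp (- q * x)) * h x \<partial>lebesgue) \<longlongrightarrow> (\<integral>x. h x \<partial>lebesgue)) at_top"
  proof (rule integral_tendsto_at_top_dominated_factor)
    show "integrable lebesgue h"
      using assms by (simp add: set_integrable_def h_def)
    show "\<bar>(1 - exp (- q * x)) * h x\<bar> \<le> \<bar>h x\<bar>" if "0 \<le> q" for q x
      using one_minus_exp_neg_bounds[of "q * x"] that
      by (cases "0 < x") (auto simp: h_def abs_mult intro!: mult_left_le_one_le)
    show "((\<lambda>q. (1 - exp (- q * x)) * h x) \<longlongrightarrow> h x) at_top" for x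
      using tendsto_mult_right[OF tendsto_one_minus_exp_neg_at_top, of x "h x"]
      by (cases "0 < x") (auto simp: h_def)
  qed measurable
  then show ?thesis
    by (simp add: Qf_eq_integral[abs_def] set_lebesgue_integral_def h_def)
qed

lemma exp_neg_difference_quotient_bound:
  fixes p q x :: real
  assumes "0 \<le> p" "0 \<le> q" "0 \<le> x"
  shows "\<bar>(exp (- q * x) - exp (- p * x)) / (p - q)\<bar> \<le> x"
proof (cases "p = q")
  case False
  have "\<bar>exp (- (q * x)) - exp (- (p * x))\<bar> \<le> \<bar>q * x - p * x\<bar>"
    using assms by (intro abs_exp_neg_diff_le) auto
  also have "\<dots> = x * \<bar>p - q\<bar>"
    using assms by (simp add: abs_mult abs_minus_commute flip: left_diff_distrib)
  finally show ?thesis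
    using False by (simp add: divide_le_eq)
qed (use assms in simp)

lemma exp_neg_difference_quotient_tendsto:
  fixes q x :: real
  shows "((\<lambda>p. (exp (- q * x) - exp (- p * x)) / (p - q)) \<longlongrightarrow> x * exp (- q * x)) (at q)"
proof -
  have "((\<lambda>p. exp (- p * x)) has_real_derivative - x * exp (- q * x)) (at q)"
    by (auto intro!: derivative_eq_intros)
  then have "((\<lambda>p. - ((exp (- p * x) - exp (- q * x)) / (p - q))) \<longlongrightarrow> - (- x * exp (- q * x))) (at q)"
    by (intro tendsto_minus) (simp add: has_field_derivative_iff)
  then show ?thesis
    by (simp add: minus_divide_left)
qed

lemma integrable_one_minus_exp_mult:
  fixes h :: "real \<Rightarrow> real"
  assumes "integrable lebesgue (\<lambda>x. x * h x)" and "0 \<le> p"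
    and [measurable]: "h \<in> borel_measurable lebesgue" and "\<And>x. x \<le> 0 \<Longrightarrow> h x = 0"
  shows "integrable lebesgue (\<lambda>x. (1 - exp (- p * x)) * h x)"
proof (rule Bochner_Integration.integrable_bound[OF integrable_mult_right[OF assms(1), of p]])
  have "norm ((1 - exp (- p * x)) * h x) \<le> norm (p * (x * h x))" for x
  proof (cases "0 < x")
    case True
    then have "\<bar>1 - exp (- (p * x))\<bar> \<le> p * x"
      using one_minus_exp_neg_bounds[of "p * x"] assms(2) by auto
    then show ?thesis
      using True assms(2) by (simp add: abs_mult mult_right_mono flip: mult.assoc)
  qed (simp add: assms(4))
  then show "AE x in lebesgue. norm ((1 - exp (- p * x)) * h x) \<le> norm (p * (x * h x))"
    by simp
qed measurable

lemma Qf_has_real_derivative: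
  assumes "set_integrable lebesgue {0<..} (\<lambda>x. x * f x)" and "0 < q"
  shows "(Qf f has_real_derivative (LINT x:{0<..}|lebesgue. x * exp (- q * x) * f x)) (at q)"
proof -
  define h where "h = (\<lambda>x::real. indicator {0<..} x * f x)"
  have xh: "integrable lebesgue (\<lambda>x. x * h x)"
    using assms(1) by (simp add: set_integrable_def h_def mult_ac)
  have h_meas [measurable]: "h \<in> borel_measurable lebesgue"
    unfolding h_def by (rule first_moment_imp_measurable[OF assms(1)])
  define quot where "quot p x = (exp (- q * x) - exp (- p * x)) / (p - q) * h x" for p x
  have quot_bound: "norm (quot p x) \<le> \<bar>x * h x\<bar>" if "0 \<le> p" for p x
  proof (cases "0 < x")
    case True
    have "\<bar>(exp (- q * x) - exp (- p * x)) / (p - q)\<bar> * \<bar>h x\<bar> \<le> x * \<bar>h x\<bar>"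
      using that assms(2) True by (intro mult_right_mono exp_neg_difference_quotient_bound) auto
    then show ?thesis
      using True by (simp add: quot_def abs_mult)
  qed (simp add: quot_def h_def)
  have integrable_Qf: "integrable lebesgue (\<lambda>x. (1 - exp (- p * x)) * h x)" if "0 \<le> p" for p
    by (rule integrable_one_minus_exp_mult[OF xh that h_meas]) (simp add: h_def)
  have quot_eq: "(Qf f p - Qf f q) / (p - q) = (\<integral>x. quot p x \<partial>lebesgue)" if "0 \<le> p" for p
    using integrable_Qf[OF that] integrable_Qf[of q] assms(2)
    by (simp add: Qf_eq_integral h_def quot_def field_simps flip: Bochner_Integration.integral_diff)
  have "((\<lambda>p. (Qf f p - Qf f q) / (p - q)) \<longlongrightarrow> (\<integral>x. x * exp (- q * x) * h x \<partial>lebesgue)) (at q within {0<..})"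
    unfolding tendsto_at_iff_sequentially comp_def
  proof (intro allI impI)
    fix X :: "nat \<Rightarrow> real"
    assume X: "\<forall>i. X i \<in> {0<..} - {q}" and "X \<longlonglongrightarrow> q"
    then have X_at: "filterlim X (at q) sequentially"
      by (auto simp: filterlim_at)
    have "(\<lambda>i. \<integral>x. quot (X i) x \<partial>lebesgue) \<longlonglongrightarrow> (\<integral>x. x * exp (- q * x) * h x \<partial>lebesgue)"
    proof (rule integral_dominated_convergence[where w = "\<lambda>x. \<bar>x * h x\<bar>"])
      show "AE x in lebesgue. (\<lambda>i. quot (X i) x) \<longlonglongrightarrow> x * exp (- q * x) * h x"
        unfolding quot_def
        by (intro AE_I2 filterlim_compose[OF _ X_at] tendsto_mult_right exp_neg_difference_quotient_tendsto)
      show "AE x in lebesgue. norm (quot (X i) x) \<le> \<bar>x * h x\<bar>" for i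
        using X quot_bound by (simp add: less_imp_le)
    qed (use xh in \<open>auto simp: quot_def\<close>)
    then show "(\<lambda>i. (Qf f (X i) - Qf f q) / (X i - q)) \<longlonglongrightarrow> (\<integral>x. x * exp (- q * x) * h x \<partial>lebesgue)"
      using X by (simp add: quot_eq less_imp_le)
  qed
  then show ?thesis
    using at_within_open[of q "{0<..}"] assms(2)
    by (simp add: has_field_derivative_iff h_def set_lebesgue_integral_def mult_ac)
qed

lemma Qf_derivative_bound:
  fixes f :: "real \<Rightarrow> real"
  assumes "set_integrable lebesgue {0<..} f" and "set_integrable lebesgue {0<..} (\<lambda>x. x * f x)"
    and "0 < q"
  shows "\<bar>q * (LINT x:{0<..}|lebesgue. x * exp (- q * x) * f x)\<bar> \<le> (LINT x:{0<..}|lebesgue. \<bar>f x\<bar>)"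
proof -
  define h where "h = (\<lambda>x::real. indicator {0<..} x * f x)"
  have [measurable]: "h \<in> borel_measurable lebesgue"
    unfolding h_def by (rule first_moment_imp_measurable[OF assms(2)])
  have decay: "q * x * exp (- q * x) \<le> 1" for x
  proof -
    have "q * x \<le> exp (q * x)"
      using exp_ge_add_one_self[of "q * x"] by linarith
    then show ?thesis
      by (simp add: exp_minus field_simps)
  qed
  have bound: "\<bar>q * x * exp (- q * x) * h x\<bar> \<le> \<bar>h x\<bar>" for x
  proof (cases "0 < x")
    case True
    have "q * x * exp (- q * x) * \<bar>h x\<bar> \<le> 1 * \<bar>h x\<bar>"
      using decay by (rule mult_right_mono) simp
    then show ?thesis
      using True assms(3) by (simp add: abs_mult)
  qed (simp add: h_def)
  have "integrable lebesgue (\<lambda>x. \<bar>h x\<bar>)"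
    using set_integrable_abs[OF assms(1)] by (simp add: set_integrable_def h_def abs_mult)
  moreover have "integrable lebesgue (\<lambda>x. q * x * exp (- q * x) * h x)"
    using bound by (intro Bochner_Integration.integrable_bound[OF \<open>integrable lebesgue (\<lambda>x. \<bar>h x\<bar>)\<close>]) auto
  ultimately have "\<bar>\<integral>x. q * x * exp (- q * x) * h x \<partial>lebesgue\<bar> \<le> (\<integral>x. \<bar>h x\<bar> \<partial>lebesgue)"
    using bound by (intro integral_abs_bound_integral) auto
  then show ?thesis
    by (simp add: set_lebesgue_integral_def h_def abs_mult mult_ac flip: integral_mult_right_zero)
qed

lemma Mff_tendsto_at_top:
  fixes K :: "real \<Rightarrow> real \<Rightarrow> real" and f :: "real \<Rightarrow> real"
  assumes "integrable (lebesgue \<Otimes>\<^sub>M lebesgue)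
    (\<lambda>(x, y). indicator {0<..} x * indicator {0<..} y * W K x y * f x * f y)"
  shows "(Mff K f \<longlongrightarrow> 1 / 2 * (\<integral>p. (case p of (x, y) \<Rightarrow>
    indicator {0<..} x * indicator {0<..} y * W K x y * f x * f y) \<partial>(lebesgue \<Otimes>\<^sub>M lebesgue))) at_top"
proof -
  define F where "F = (\<lambda>(x::real, y::real). indicator {0<..} x * indicator {0<..} y * W K x y * f x * f y)"
  define \<phi> where "\<phi> q = (\<lambda>(x, y). (1 - exp (- q * x)) * (1 - exp (- q * y)))" for q :: real
  have F_int: "integrable (lebesgue \<Otimes>\<^sub>M lebesgue) F"
    using assms by (simp add: F_def)
  have \<phi>_meas [measurable]: "\<phi> q \<in> borel_measurable (lebesgue \<Otimes>\<^sub>M lebesgue)" for q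
    unfolding \<phi>_def by measurable
  have bound: "\<bar>\<phi> q p * F p\<bar> \<le> \<bar>F p\<bar>" if "0 \<le> q" for q p
  proof (cases "0 < fst p \<and> 0 < snd p")
    case True
    then have "\<bar>\<phi> q p\<bar> \<le> 1"
      using one_minus_exp_neg_bounds[of "q * fst p"] one_minus_exp_neg_bounds[of "q * snd p"] that
      by (simp add: \<phi>_def case_prod_beta abs_mult mult_le_one)
    then show ?thesis
      by (simp add: abs_mult mult_left_le_one_le)
  qed (auto simp: F_def case_prod_beta)
  have Mff_eq: "Mff K f q = 1 / 2 * (\<integral>p. \<phi> q p * F p \<partial>(lebesgue \<Otimes>\<^sub>M lebesgue))" if "0 \<le> q" for q
  proof -
    have "integrable (lebesgue \<Otimes>\<^sub>M lebesgue) (\<lambda>p. \<phi> q p * F p)"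
      using bound[OF that] F_int by (intro Bochner_Integration.integrable_bound[OF F_int]) auto
    note Fubini = lebesgue_pair.integral_fst'[OF this]
    have "Mff K f q = 1 / 2 * (\<integral>x. \<integral>y. \<phi> q (x, y) * F (x, y) \<partial>lebesgue \<partial>lebesgue)"
      unfolding Mff_def set_lebesgue_integral_def
      by (simp add: \<phi>_def F_def mult_ac flip: integral_mult_right_zero)
    then show ?thesis
      by (simp add: Fubini)
  qed
  have "((\<lambda>q. \<integral>p. \<phi> q p * F p \<partial>(lebesgue \<Otimes>\<^sub>M lebesgue)) \<longlongrightarrow> integral\<^sup>L (lebesgue \<Otimes>\<^sub>M lebesgue) F) at_top"
  proof (rule integral_tendsto_at_top_dominated_factor[OF F_int \<phi>_meas bound])
    show "((\<lambda>q. \<phi> q p * F p) \<longlongrightarrow> F p) at_top" for p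
      using tendsto_mult_right[OF tendsto_mult[OF tendsto_one_minus_exp_neg_at_top tendsto_one_minus_exp_neg_at_top],
          of "fst p" "snd p" "F p"]
      by (cases "0 < fst p \<and> 0 < snd p") (auto simp: \<phi>_def F_def case_prod_beta)
  qed
  moreover have "\<forall>\<^sub>F q in at_top. 1 / 2 * (\<integral>p. \<phi> q p * F p \<partial>(lebesgue \<Otimes>\<^sub>M lebesgue)) = Mff K f q"
    using eventually_ge_at_top[of 0] by eventually_elim (simp add: Mff_eq)
  ultimately show ?thesis
    unfolding F_def by (blast intro: Lim_transform_eventually tendsto_mult_left)
qed

text \<open>The kernel extended by zero off the open quadrant, so that it is Borel measurable on the
  whole plane when \<open>K\<close> is continuous on the quadrant.\<close>

definition K0 :: "(real \<Rightarrow> real \<Rightarrow> real) \<Rightarrow> real \<Rightarrow> real \<Rightarrow> real" where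
  "K0 K x y = (if 0 < x \<and> 0 < y then K x y else 0)"

lemma borel_measurable_K0:
  assumes "continuous_on ({0<..} \<times> {0<..}) (\<lambda>p. K (fst p) (snd p))"
  shows "(\<lambda>p. K0 K (fst p) (snd p)) \<in> borel_measurable borel"
proof -
  have "(\<lambda>p. indicator ({0<..} \<times> {0<..}) p *\<^sub>R K (fst p) (snd p)) \<in> borel_measurable borel"
    by (rule borel_measurable_continuous_on_indicator[OF _ assms]) (intro borel_open open_Times; simp)
  moreover have "(\<lambda>p. indicator ({0<..} \<times> {0<..}) p *\<^sub>R K (fst p) (snd p)) = (\<lambda>p. K0 K (fst p) (snd p))"
    by (auto simp: K0_def indicator_def)
  ultimately show ?thesis
    by simp
qed

locale lower_bounded_kernel_profile =
  fixes K :: "real \<Rightarrow> real \<Rightarrow> real" and f :: "real \<Rightarrow> real" and c\<^sub>0 :: real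
  assumes c\<^sub>0_pos: "0 < c\<^sub>0"
    and kernel_lower_bound: "\<forall>x>0. \<forall>y>0. c\<^sub>0 \<le> K x y"
    and kernel_symmetric: "\<forall>x>0. \<forall>y>0. K x y = K y x"
    and kernel_differentiable: "\<forall>x>0. \<forall>y>0. (\<lambda>p. K (fst p) (snd p)) differentiable (at (x, y))"
    and profile: "self_similar_profile K f"
begin

lemma first_moment: "set_integrable lebesgue {0<..} (\<lambda>x. x * f x)"
  using profile by (simp add: self_similar_profile_def)

lemma kernel_continuous: "continuous_on ({0<..} \<times> {0<..}) (\<lambda>p. K (fst p) (snd p))"
proof (intro continuous_at_imp_continuous_on ballI)
  fix p :: "real \<times> real"
  assume "p \<in> {0<..} \<times> {0<..}"
  then show "isCont (\<lambda>p. K (fst p) (snd p)) p"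
    using kernel_differentiable by (auto intro: differentiable_imp_continuous_within)
qed

lemma measurable_K0 [measurable (raw)]:
  "g \<in> borel_measurable M \<Longrightarrow> h \<in> borel_measurable M \<Longrightarrow> (\<lambda>x. K0 K (g x) (h x)) \<in> borel_measurable M"
proof -
  assume "g \<in> borel_measurable M" "h \<in> borel_measurable M"
  then have "(\<lambda>x. (g x, h x)) \<in> M \<rightarrow>\<^sub>M borel"
    by (simp flip: borel_prod)
  from measurable_compose[OF this borel_measurable_K0[OF kernel_continuous]] show ?thesis
    by simp
qed

lemma K0_nonneg: "0 \<le> K0 K x y"
  using kernel_lower_bound c\<^sub>0_pos by (auto simp: K0_def intro: order_trans[of 0 c\<^sub>0])

lemma K0_commute: "K0 K x y = K0 K y x"
  using kernel_symmetric by (auto simp: K0_def)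

text \<open>The profile is nonnegative only almost everywhere; \<open>fpos\<close> is a representative that is
  nonnegative everywhere and vanishes on \<open>(-\<infinity>, 0]\<close>, so that products with it can be moved
  in and out of \<open>ennreal\<close>.\<close>

definition fpos :: "real \<Rightarrow> real" where
  "fpos x = (if 0 < x then max 0 (f x) else 0)"

lemma fpos_nonneg: "0 \<le> fpos x"
  by (simp add: fpos_def)

lemma fpos_eq_0: "x \<le> 0 \<Longrightarrow> fpos x = 0"
  by (simp add: fpos_def)

lemma AE_fpos_eq: "AE x in lebesgue. indicator {0<..} x * f x = fpos x"
  using profile unfolding self_similar_profile_def
  by (auto elim!: eventually_mono simp: fpos_def indicator_def)

lemma measurable_restricted_profile [measurable]:
  "(\<lambda>x. indicator {0<..} x * f x) \<in> borel_measurable lebesgue"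
  by (rule first_moment_imp_measurable[OF first_moment])

lemma borel_measurable_fpos [measurable]: "fpos \<in> borel_measurable lebesgue"
proof -
  have "(\<lambda>x. max 0 (indicator {0<..} x * f x)) \<in> borel_measurable lebesgue"
    by measurable
  moreover have "(\<lambda>x. max 0 (indicator {0<..} x * f x)) = fpos"
    by (auto simp: fpos_def indicator_def)
  ultimately show ?thesis
    by simp
qed

lemma AE_abs_restricted_profile: "AE x in lebesgue. \<bar>indicator {0<..} x * f x\<bar> = fpos x"
  using AE_fpos_eq by eventually_elim (simp add: fpos_nonneg)

lemma ennreal_collision_eq_fpos:
  assumes "0 < y" "0 < z" "0 \<le> f y"
  shows "ennreal (K y z * y * f y * f z) = ennreal (K0 K y z * y * fpos y * fpos z)"
proof (cases "0 \<le> f z")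
  case False
  have "0 \<le> K y z * y * f y"
    using K0_nonneg[of y z] assms by (simp add: K0_def)
  then have "K y z * y * f y * f z \<le> 0"
    using False by (simp add: mult_nonneg_nonpos)
  then show ?thesis
    using assms False by (simp add: K0_def fpos_def ennreal_neg)
qed (use assms in \<open>simp add: K0_def fpos_def\<close>)

lemma fpos_self_similar:
  "AE x in lebesgue. 0 < x \<longrightarrow> ennreal (x\<^sup>2 * fpos x) =
     (\<integral>\<^sup>+y. \<integral>\<^sup>+z. (if 0 < y \<and> y < x \<and> x - y < z then ennreal (K0 K y z * y * fpos y * fpos z) else 0)
       \<partial>lebesgue \<partial>lebesgue)"
proof -
  have f_nonneg: "AE x in lebesgue. 0 < x \<longrightarrow> 0 \<le> f x"
    using profile by (simp add: self_similar_profile_def)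
  have "AE x in lebesgue. 0 < x \<longrightarrow> ennreal (x\<^sup>2 * f x) =
      (\<integral>\<^sup>+ y\<in>{0<..<x}. (\<integral>\<^sup>+ z\<in>{x - y<..}. ennreal (K y z * y * f y * f z) \<partial>lebesgue) \<partial>lebesgue)"
    using profile by (simp add: self_similar_profile_def)
  then show ?thesis
    using f_nonneg
  proof (eventually_elim, intro impI)
    fix x :: real
    assume eq: "0 < x \<longrightarrow> ennreal (x\<^sup>2 * f x) =
      (\<integral>\<^sup>+ y\<in>{0<..<x}. (\<integral>\<^sup>+ z\<in>{x - y<..}. ennreal (K y z * y * f y * f z) \<partial>lebesgue) \<partial>lebesgue)"
      and "0 < x \<longrightarrow> 0 \<le> f x" and x: "0 < x"
    then have "ennreal (x\<^sup>2 * fpos x) = ennreal (x\<^sup>2 * f x)"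
      by (simp add: fpos_def)
    also have "\<dots> = (\<integral>\<^sup>+ y\<in>{0<..<x}. (\<integral>\<^sup>+ z\<in>{x - y<..}. ennreal (K y z * y * f y * f z) \<partial>lebesgue) \<partial>lebesgue)"
      using eq x by simp
    also have "\<dots> = (\<integral>\<^sup>+y. \<integral>\<^sup>+z. (if 0 < y \<and> y < x \<and> x - y < z then ennreal (K0 K y z * y * fpos y * fpos z) else 0)
       \<partial>lebesgue \<partial>lebesgue)"
      using f_nonneg
    proof (intro nn_integral_cong_AE, eventually_elim)
      case (elim y)
      show ?case
      proof (cases "0 < y \<and> y < x")
        case True
        then show ?thesis
          using elim ennreal_collision_eq_fpos[of y]
          by (auto simp: indicator_def intro!: nn_integral_cong)
      qed (auto simp: indicator_def)
    qed
    finally show "ennreal (x\<^sup>2 * fpos x) = (\<integral>\<^sup>+y. \<integral>\<^sup>+z. (if 0 < y \<and> y < x \<and> x - y < z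
      then ennreal (K0 K y z * y * fpos y * fpos z) else 0) \<partial>lebesgue \<partial>lebesgue)" .
  qed
qed

definition tail_mass :: "real \<Rightarrow> ennreal" where
  "tail_mass e = (\<integral>\<^sup>+x. (if e < x then ennreal (fpos x) else 0) \<partial>lebesgue)"

definition tail_interaction :: "real \<Rightarrow> ennreal" where
  "tail_interaction e = (\<integral>\<^sup>+y. \<integral>\<^sup>+z. (if e < y \<and> e < z then ennreal (K0 K y z * fpos y * fpos z) else 0)
     \<partial>lebesgue \<partial>lebesgue)"

lemma tail_mass_finite:
  assumes "0 < e"
  shows "tail_mass e < \<infinity>"
proof -
  have "integrable lebesgue (\<lambda>x. x * fpos x)"
  proof (rule integrable_cong_AE_imp)
    show "integrable lebesgue (\<lambda>x. x * (indicator {0<..} x * f x))"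
      using first_moment by (simp add: set_integrable_def mult_ac)
    show "AE x in lebesgue. x * (indicator {0<..} x * f x) = x * fpos x"
      using AE_fpos_eq by eventually_elim simp
  qed measurable
  moreover have "\<bar>x\<bar> * fpos x = x * fpos x" for x
    by (cases "0 < x") (auto simp: fpos_eq_0)
  ultimately have "(\<integral>\<^sup>+x. ennreal (x * fpos x) \<partial>lebesgue) < \<infinity>"
    by (simp add: integrable_iff_bounded fpos_nonneg abs_mult)
  moreover have "tail_mass e \<le> (\<integral>\<^sup>+x. ennreal (1 / e) * ennreal (x * fpos x) \<partial>lebesgue)"
    unfolding tail_mass_def
  proof (intro nn_integral_mono)
    fix x :: real
    show "(if e < x then ennreal (fpos x) else 0) \<le> ennreal (1 / e) * ennreal (x * fpos x)"
    proof (cases "e < x")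
      case True
      then have "ennreal (fpos x) \<le> ennreal (1 / e * (x * fpos x))"
        using assms fpos_nonneg[of x] by (intro ennreal_leI) (simp add: field_simps mult_right_mono)
      also have "\<dots> = ennreal (1 / e) * ennreal (x * fpos x)"
        using True assms fpos_nonneg[of x] by (intro ennreal_mult) auto
      finally show ?thesis
        using True by simp
    qed simp
  qed
  ultimately show ?thesis
    by (simp add: nn_integral_cmult ennreal_mult_less_top le_less_trans)
qed

text \<open>The integrand of the self-similarity equation at \<open>x\<close>, divided by \<open>x\<^sup>2\<close> and restricted
  to \<open>y, z > e\<close>; integrating it first in \<open>x\<close> produces the weight \<open>z / (y + z)\<close>.\<close>

definition gain_density :: "real \<Rightarrow> real \<Rightarrow> real \<Rightarrow> real \<Rightarrow> ennreal" where
  "gain_density e x y z = ennreal (1 / x\<^sup>2) *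
     (if e < y \<and> e < z \<and> y < x \<and> x < y + z then ennreal (K0 K y z * y * fpos y * fpos z) else 0)"

lemma measurable_gain_density [measurable (raw)]:
  assumes [measurable]: "g \<in> M \<rightarrow>\<^sub>M lebesgue" "h \<in> M \<rightarrow>\<^sub>M lebesgue" "k \<in> M \<rightarrow>\<^sub>M lebesgue"
  shows "(\<lambda>w. gain_density e (g w) (h w) (k w)) \<in> borel_measurable M"
  unfolding gain_density_def by measurable

lemma nn_integral_gain_density_dx:
  assumes "0 < e"
  shows "(\<integral>\<^sup>+x. gain_density e x y z \<partial>lebesgue)
    = (if e < y \<and> e < z then ennreal (K0 K y z * fpos y * fpos z * (z / (y + z))) else 0)"
proof (cases "e < y \<and> e < z")
  case True
  then have y: "0 < y" and z: "0 < z"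
    using assms by auto
  define c where "c = K0 K y z * y * fpos y * fpos z"
  have c: "0 \<le> c"
    using y by (simp add: c_def K0_nonneg fpos_nonneg)
  have "(\<integral>\<^sup>+x. gain_density e x y z \<partial>lebesgue)
      = ennreal c * (\<integral>\<^sup>+x. (if y < x \<and> x < y + z then ennreal (1 / x\<^sup>2) else 0) \<partial>lebesgue)"
    using True
    by (subst nn_integral_cmult[symmetric]) (auto simp: gain_density_def c_def mult.commute intro!: nn_integral_cong)
  also have "\<dots> = ennreal c * ennreal (1 / y - 1 / (y + z))"
    using nn_integral_inverse_square[OF y z] by simp
  also have "\<dots> = ennreal (c * (1 / y - 1 / (y + z)))"
    using y z c by (intro ennreal_mult[symmetric]) (auto simp: field_simps)
  also have "c * (1 / y - 1 / (y + z)) = K0 K y z * fpos y * fpos z * (y * (1 / y - 1 / (y + z)))"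
    by (simp add: c_def ac_simps)
  also have "y * (1 / y - 1 / (y + z)) = z / (y + z)"
    using y z by (simp add: right_diff_distrib) (simp add: field_simps)
  finally show ?thesis
    using True by simp
qed (auto simp: gain_density_def)

lemma nn_integral_gain_density_dydz:
  assumes "0 < e"
  shows "AE x in lebesgue. (\<integral>\<^sup>+y. \<integral>\<^sup>+z. gain_density e x y z \<partial>lebesgue \<partial>lebesgue)
    \<le> (if e < x then ennreal (fpos x) else 0)"
  using fpos_self_similar
proof eventually_elim
  case (elim x)
  show ?case
  proof (cases "e < x")
    case True
    then have x: "0 < x"
      using assms by simp
    have "(\<integral>\<^sup>+y. \<integral>\<^sup>+z. gain_density e x y z \<partial>lebesgue \<partial>lebesgue)
        \<le> (\<integral>\<^sup>+y. \<integral>\<^sup>+z. ennreal (1 / x\<^sup>2) * (if 0 < y \<and> y < x \<and> x - y < z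
             then ennreal (K0 K y z * y * fpos y * fpos z) else 0) \<partial>lebesgue \<partial>lebesgue)"
      unfolding gain_density_def using assms by (intro nn_integral_mono mult_left_mono) auto
    also have "\<dots> = ennreal (1 / x\<^sup>2) * ennreal (x\<^sup>2 * fpos x)"
      using elim x by (simp add: nn_integral_cmult)
    also have "\<dots> = ennreal (fpos x)"
      using x by (simp add: fpos_nonneg flip: ennreal_mult)
    finally show ?thesis
      using True by simp
  next
    case False
    then have "gain_density e x y z = 0" for y z
      by (auto simp: gain_density_def)
    then show ?thesis
      by simp
  qed
qed

lemma weighted_tail_interaction_le:
  assumes "0 < e"
  shows "(\<integral>\<^sup>+y. \<integral>\<^sup>+z. (if e < y \<and> e < z then ennreal (K0 K y z * fpos y * fpos z * (z / (y + z))) else 0)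
    \<partial>lebesgue \<partial>lebesgue) \<le> tail_mass e"
proof -
  have "(\<integral>\<^sup>+y. \<integral>\<^sup>+z. (if e < y \<and> e < z then ennreal (K0 K y z * fpos y * fpos z * (z / (y + z))) else 0)
      \<partial>lebesgue \<partial>lebesgue) = (\<integral>\<^sup>+y. \<integral>\<^sup>+z. \<integral>\<^sup>+x. gain_density e x y z \<partial>lebesgue \<partial>lebesgue \<partial>lebesgue)"
    by (simp add: nn_integral_gain_density_dx[OF assms])
  also have "\<dots> = (\<integral>\<^sup>+y. \<integral>\<^sup>+x. \<integral>\<^sup>+z. gain_density e x y z \<partial>lebesgue \<partial>lebesgue \<partial>lebesgue)"
    using lebesgue_pair.Fubini[of "\<lambda>(x, z). gain_density e x _ z"] by simp
  also have "\<dots> = (\<integral>\<^sup>+x. \<integral>\<^sup>+y. \<integral>\<^sup>+z. gain_density e x y z \<partial>lebesgue \<partial>lebesgue \<partial>lebesgue)"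
    using lebesgue_pair.Fubini[of "\<lambda>(x, y). \<integral>\<^sup>+z. gain_density e x y z \<partial>lebesgue"] by simp
  also have "\<dots> \<le> tail_mass e"
    unfolding tail_mass_def using nn_integral_gain_density_dydz[OF assms] by (rule nn_integral_mono_AE)
  finally show ?thesis .
qed

lemma tail_interaction_le_tail_mass:
  assumes "0 < e"
  shows "tail_interaction e \<le> 2 * tail_mass e"
proof -
  \<comment> \<open>the weights \<open>z / (y + z)\<close> and \<open>y / (y + z)\<close> add up to 1 and are exchanged by the symmetry of \<open>K\<close>\<close>
  define A where "A y z = (if e < y \<and> e < z then ennreal (K0 K y z * fpos y * fpos z * (z / (y + z))) else 0)"
    for y z :: real
  have [measurable]: "(\<lambda>(y, z). A y z) \<in> borel_measurable (lebesgue \<Otimes>\<^sub>M lebesgue)"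
    unfolding A_def by measurable
  have split: "(if e < y \<and> e < z then ennreal (K0 K y z * fpos y * fpos z) else 0) = A y z + A z y" for y z
  proof (cases "e < y \<and> e < z")
    case True
    then have "0 < y + z"
      using assms by simp
    then have "ennreal (K0 K y z * fpos y * fpos z)
        = ennreal (K0 K y z * fpos y * fpos z * (z / (y + z)) + K0 K y z * fpos y * fpos z * (y / (y + z)))"
      by (simp add: add_divide_distrib[symmetric] add.commute flip: distrib_left)
    also have "\<dots> = A y z + A z y"
      using True assms by (simp add: A_def K0_commute[of z y] K0_nonneg fpos_nonneg ac_simps)
    finally show ?thesis
      using True by simp
  qed (auto simp: A_def)
  have "tail_interaction e = (\<integral>\<^sup>+y. \<integral>\<^sup>+z. A y z \<partial>lebesgue \<partial>lebesgue) + (\<integral>\<^sup>+y. \<integral>\<^sup>+z. A z y \<partial>lebesgue \<partial>lebesgue)"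
    unfolding tail_interaction_def split
    by (simp add: nn_integral_add)
  also have "(\<integral>\<^sup>+y. \<integral>\<^sup>+z. A z y \<partial>lebesgue \<partial>lebesgue) = (\<integral>\<^sup>+y. \<integral>\<^sup>+z. A y z \<partial>lebesgue \<partial>lebesgue)"
    using lebesgue_pair.Fubini[of "\<lambda>(y, z). A y z"] by simp
  also have "(\<integral>\<^sup>+y. \<integral>\<^sup>+z. A y z \<partial>lebesgue \<partial>lebesgue) \<le> tail_mass e"
    unfolding A_def by (rule weighted_tail_interaction_le[OF assms])
  finally show ?thesis
    by (simp add: mult_2 add_mono)
qed

lemma tail_mass_square_le:
  "ennreal c\<^sub>0 * tail_mass e * tail_mass e \<le> tail_interaction e"
proof -
  have "ennreal c\<^sub>0 * tail_mass e * tail_mass e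
      = (\<integral>\<^sup>+y. \<integral>\<^sup>+z. ennreal c\<^sub>0 * (if e < y then ennreal (fpos y) else 0) * (if e < z then ennreal (fpos z) else 0)
          \<partial>lebesgue \<partial>lebesgue)"
    unfolding tail_mass_def by (simp add: nn_integral_cmult nn_integral_multc mult.assoc)
  also have "\<dots> \<le> tail_interaction e"
    unfolding tail_interaction_def
  proof (intro nn_integral_mono)
    fix y z :: real
    show "ennreal c\<^sub>0 * (if e < y then ennreal (fpos y) else 0) * (if e < z then ennreal (fpos z) else 0)
        \<le> (if e < y \<and> e < z then ennreal (K0 K y z * fpos y * fpos z) else 0)"
    proof (cases "e < y \<and> e < z")
      case True
      have "c\<^sub>0 * fpos y * fpos z \<le> K0 K y z * fpos y * fpos z"
      proof (cases "0 < y \<and> 0 < z")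
        case True
        then show ?thesis
          using kernel_lower_bound by (intro mult_right_mono) (auto simp: K0_def fpos_nonneg)
      qed (auto simp: fpos_def)
      then show ?thesis
        using True c\<^sub>0_pos by (simp add: fpos_nonneg ennreal_leI flip: ennreal_mult)
    qed auto
  qed
  finally show ?thesis .
qed

lemma tail_mass_le:
  assumes "0 < e"
  shows "tail_mass e \<le> ennreal (2 / c\<^sub>0)"
proof -
  obtain r where r: "tail_mass e = ennreal r" "0 \<le> r"
    using tail_mass_finite[OF assms] by (cases "tail_mass e") auto
  have "ennreal (c\<^sub>0 * r * r) \<le> ennreal (2 * r)"
    using tail_mass_square_le[of e] tail_interaction_le_tail_mass[OF assms] r c\<^sub>0_pos
    by (simp add: ennreal_mult)
  then have "c\<^sub>0 * r * r \<le> 2 * r"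
    using r by simp
  then have "r \<le> 2 / c\<^sub>0"
    using r c\<^sub>0_pos by (cases "r = 0") (auto simp: field_simps)
  then show ?thesis
    using r by (simp add: ennreal_leI)
qed

lemma nn_integral_fpos_le: "(\<integral>\<^sup>+x. ennreal (fpos x) \<partial>lebesgue) \<le> ennreal (2 / c\<^sub>0)"
proof -
  have "(\<integral>\<^sup>+x. ennreal (fpos x) \<partial>lebesgue) = (\<integral>\<^sup>+x. (if 0 < x then ennreal (fpos x) else 0) \<partial>lebesgue)"
    by (intro nn_integral_cong) (simp add: fpos_eq_0)
  also have "\<dots> = (SUP n. tail_mass (1 / Suc n))"
    unfolding tail_mass_def by (rule nn_integral_if_pos_eq_SUP) measurable
  also have "\<dots> \<le> ennreal (2 / c\<^sub>0)"
    by (intro SUP_least tail_mass_le) simp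
  finally show ?thesis .
qed

lemma interaction_le: "(\<integral>\<^sup>+y. \<integral>\<^sup>+z. ennreal (K0 K y z * fpos y * fpos z) \<partial>lebesgue \<partial>lebesgue) \<le> ennreal (4 / c\<^sub>0)"
proof -
  have "(\<integral>\<^sup>+y. \<integral>\<^sup>+z. ennreal (K0 K y z * fpos y * fpos z) \<partial>lebesgue \<partial>lebesgue)
      = (\<integral>\<^sup>+p. (if 0 < min (fst p) (snd p) then ennreal (K0 K (fst p) (snd p) * fpos (fst p) * fpos (snd p)) else 0)
          \<partial>(lebesgue \<Otimes>\<^sub>M lebesgue))"
    by (subst lebesgue.nn_integral_fst[symmetric]) (auto intro!: nn_integral_cong simp: fpos_eq_0)
  also have "\<dots> = (SUP n. tail_interaction (1 / Suc n))"
    by (subst nn_integral_if_pos_eq_SUP)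
      (auto simp: tail_interaction_def lebesgue.nn_integral_fst[symmetric] cong: if_cong)
  also have "\<dots> \<le> ennreal (4 / c\<^sub>0)"
  proof (rule SUP_least)
    fix n :: nat
    have "tail_interaction (1 / Suc n) \<le> 2 * ennreal (2 / c\<^sub>0)"
      using tail_interaction_le_tail_mass tail_mass_le
      by (meson of_nat_0_less_iff zero_less_Suc divide_pos_pos zero_less_one order_trans mult_left_mono zero_le)
    also have "2 * ennreal (2 / c\<^sub>0) = ennreal (4 / c\<^sub>0)"
      using c\<^sub>0_pos ennreal_mult[of 2 "2 / c\<^sub>0"] by simp
    finally show "tail_interaction (1 / Suc n) \<le> ennreal (4 / c\<^sub>0)" .
  qed
  finally show ?thesis .
qed

lemma profile_integrable: "set_integrable lebesgue {0<..} f"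
proof -
  have "integrable lebesgue fpos"
    using nn_integral_fpos_le by (intro integrableI_bounded) (auto simp: fpos_nonneg le_less_trans)
  then have "integrable lebesgue (\<lambda>x. indicator {0<..} x * f x)"
    by (rule integrable_cong_AE_imp) (use AE_fpos_eq in \<open>auto elim: eventually_mono\<close>)
  then show ?thesis
    by (simp add: set_integrable_def)
qed

lemma interaction_finite:
  "(\<integral>\<^sup>+ x\<in>{0<..}. (\<integral>\<^sup>+ y\<in>{0<..}. ennreal (K x y * f x * f y) \<partial>lebesgue) \<partial>lebesgue) < \<infinity>"
proof -
  have "(\<integral>\<^sup>+ x\<in>{0<..}. (\<integral>\<^sup>+ y\<in>{0<..}. ennreal (K x y * f x * f y) \<partial>lebesgue) \<partial>lebesgue)
      = (\<integral>\<^sup>+x. \<integral>\<^sup>+y. ennreal (K0 K x y * (indicator {0<..} x * f x) * (indicator {0<..} y * f y))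
          \<partial>lebesgue \<partial>lebesgue)"
    by (auto intro!: nn_integral_cong simp: K0_def indicator_def)
  also have "\<dots> = (\<integral>\<^sup>+x. \<integral>\<^sup>+y. ennreal (K0 K x y * fpos x * fpos y) \<partial>lebesgue \<partial>lebesgue)"
    by (rule nn_integral2_cong_AE[OF AE_fpos_eq, where F = "\<lambda>x y a b. ennreal (K0 K x y * a * b)"])
  also have "\<dots> < \<infinity>"
    using interaction_le by (simp add: le_less_trans)
  finally show ?thesis .
qed

lemma abs_K0_minus_two_le:
  assumes "0 < x" "0 < y"
  shows "\<bar>K0 K x y - 2\<bar> \<le> (1 + 2 / c\<^sub>0) * K0 K x y"
proof -
  have "c\<^sub>0 \<le> K0 K x y"
    using assms kernel_lower_bound by (simp add: K0_def)
  moreover have "2 \<le> 2 / c\<^sub>0 * K0 K x y"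
    using calculation c\<^sub>0_pos by (simp add: field_simps)
  ultimately show ?thesis
    using c\<^sub>0_pos by (simp add: algebra_simps abs_le_iff)
qed

lemma W_integrable:
  "integrable (lebesgue \<Otimes>\<^sub>M lebesgue) (\<lambda>(x, y). indicator {0<..} x * indicator {0<..} y * W K x y * f x * f y)"
proof -
  define h where "h = (\<lambda>x::real. indicator {0<..} x * f x)"
  have [measurable]: "h \<in> borel_measurable lebesgue"
    unfolding h_def by measurable
  have F_meas: "(\<lambda>p. (K0 K (fst p) (snd p) - 2) * h (fst p) * h (snd p)) \<in> borel_measurable (lebesgue \<Otimes>\<^sub>M lebesgue)"
    by measurable
  have F_eq: "(\<lambda>(x, y). indicator {0<..} x * indicator {0<..} y * W K x y * f x * f y)
      = (\<lambda>p. (K0 K (fst p) (snd p) - 2) * h (fst p) * h (snd p))"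
    by (auto simp: W_def K0_def h_def indicator_def)
  have bound: "\<bar>K0 K x y - 2\<bar> * \<bar>h x\<bar> * \<bar>h y\<bar> \<le> (1 + 2 / c\<^sub>0) * (K0 K x y * \<bar>h x\<bar> * \<bar>h y\<bar>)" for x y
  proof (cases "0 < x \<and> 0 < y")
    case True
    then show ?thesis
      using mult_right_mono[OF abs_K0_minus_two_le, of x y "\<bar>h x\<bar> * \<bar>h y\<bar>"] by (simp add: mult.assoc)
  qed (auto simp: h_def)
  have "(\<integral>\<^sup>+p. ennreal (norm ((K0 K (fst p) (snd p) - 2) * h (fst p) * h (snd p))) \<partial>(lebesgue \<Otimes>\<^sub>M lebesgue))
      = (\<integral>\<^sup>+x. \<integral>\<^sup>+y. ennreal (\<bar>K0 K x y - 2\<bar> * \<bar>h x\<bar> * \<bar>h y\<bar>) \<partial>lebesgue \<partial>lebesgue)"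
    using F_meas by (simp add: lebesgue.nn_integral_fst[symmetric] abs_mult)
  also have "\<dots> \<le> (\<integral>\<^sup>+x. \<integral>\<^sup>+y. ennreal ((1 + 2 / c\<^sub>0) * (K0 K x y * \<bar>h x\<bar> * \<bar>h y\<bar>)) \<partial>lebesgue \<partial>lebesgue)"
    using bound by (intro nn_integral_mono ennreal_leI)
  also have "\<dots> = (\<integral>\<^sup>+x. \<integral>\<^sup>+y. ennreal ((1 + 2 / c\<^sub>0) * (K0 K x y * fpos x * fpos y)) \<partial>lebesgue \<partial>lebesgue)"
    unfolding h_def
    by (rule nn_integral2_cong_AE[OF AE_abs_restricted_profile,
          where F = "\<lambda>x y a b. ennreal ((1 + 2 / c\<^sub>0) * (K0 K x y * a * b))"])
  also have "\<dots> = ennreal (1 + 2 / c\<^sub>0) * (\<integral>\<^sup>+x. \<integral>\<^sup>+y. ennreal (K0 K x y * fpos x * fpos y) \<partial>lebesgue \<partial>lebesgue)"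
    using c\<^sub>0_pos by (simp add: ennreal_mult K0_nonneg fpos_nonneg nn_integral_cmult)
  also have "\<dots> < \<infinity>"
    using interaction_le by (simp add: ennreal_mult_less_top le_less_trans)
  finally show ?thesis
    unfolding F_eq by (rule integrableI_bounded[OF F_meas])
qed

end

theorem lemma2p3:
  fixes \<alpha> \<epsilon> C\<^sub>0 c\<^sub>0 :: real and K :: "real \<Rightarrow> real \<Rightarrow> real" and f :: "real \<Rightarrow> real"
  assumes "kernel_assms \<alpha> \<epsilon> C\<^sub>0 K"
    and "c\<^sub>0 > 0" and "\<forall>x>0. \<forall>y>0. K x y \<ge> c\<^sub>0"
    and "self_similar_profile K f"
    and "(LINT x:{0<..}|lebesgue. x * f x) = 1"
  shows "(\<exists>L. (Qf f \<longlongrightarrow> L) at_top)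
    \<and> set_integrable lebesgue {0<..} f
    \<and> (\<exists>C. \<forall>q>0. \<exists>D. (Qf f has_real_derivative D) (at q) \<and> \<bar>q * D\<bar> \<le> C)
    \<and> (\<integral>\<^sup>+ x\<in>{0<..}. (\<integral>\<^sup>+ y\<in>{0<..}. ennreal (K x y * f x * f y) \<partial>lebesgue) \<partial>lebesgue) < \<infinity>
    \<and> (\<exists>L. (Mff K f \<longlongrightarrow> L) at_top)"
proof -
  interpret lower_bounded_kernel_profile K f c\<^sub>0
    using assms(1-4) by unfold_locales (auto simp: kernel_assms_def)
  have "\<forall>q>0. \<exists>D. (Qf f has_real_derivative D) (at q) \<and> \<bar>q * D\<bar> \<le> (LINT x:{0<..}|lebesgue. \<bar>f x\<bar>)"
    using Qf_has_real_derivative[OF first_moment] Qf_derivative_bound[OF profile_integrable first_moment]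
    by blast
  then show ?thesis
    using Qf_tendsto_at_top[OF profile_integrable] profile_integrable interaction_finite
      Mff_tendsto_at_top[OF W_integrable]
    by blast
qed

end
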